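(* Let $H_m$ and $H_n$ be complex Hadamard matrices of orders $m$ and $n$, and let $H=H_m\otimes H_n$ (of order $mn$). Let $R_1$ be the set of the first $n$ rows of $H$ and $R$ the set of the remaining rows. For $1\le i\le n$ let $C_i$ be the set of the $m$ columns of $H$ with indices $i, n+i, 2n+i,\dots,(m-1)n+i$, and let $M_{1i}$ be the submatrix of $H$ with rows $R_1$ and columns $C_i$. Then $\{C_1,\dots,C_n\}$ is a partition of the columns, $\{R,R_1\}$ is a partition of the rows, and for all $i\neq j$ every column of $M_{1i}$ is orthogonal to every column of $M_{1j}$. Consequently, for every $i$ and every $a\in\mathbb{T}$, the matrix obtained from $H$ by replacing $M_{1i}$ with $aM_{1i}$ is a complex Hadamard matrix (so $H$ admits infinitely many such switchings).
   Context: $\mathbb{T}$ is the set of complex numbers of modulus $1$. A complex Hadamard matrix of order $n$ is an $n\times n$ matrix with all entries in $\mathbb{T}$ and $HH^{\ast}=nI_n$. The Kronecker product is $A\otimes B=[a_{ij}B]$, so the first $n$ rows of $H_m\otimes H_n$ consist of the $m$ blocks $(H_m)_{1j}H_n$ placed side by side. *)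

theory Defs
  imports Complex_Main
begin

text \<open>Matrices of order n are functions nat => nat => complex, indexed from 0 and
  considered only on entries i, j < n.\<close>

definition complex_hadamard :: "nat \<Rightarrow> (nat \<Rightarrow> nat \<Rightarrow> complex) \<Rightarrow> bool" where
  "complex_hadamard n H \<longleftrightarrow>
     (\<forall>i<n. \<forall>j<n. norm (H i j) = 1) \<and>
     (\<forall>i<n. \<forall>k<n. (\<Sum>j<n. H i j * cnj (H k j)) = (if i = k then of_nat n else 0))"

definition kron :: "nat \<Rightarrow> (nat \<Rightarrow> nat \<Rightarrow> complex) \<Rightarrow> (nat \<Rightarrow> nat \<Rightarrow> complex) \<Rightarrow> nat \<Rightarrow> nat \<Rightarrow> complex" where
  "kron n A B p q = A (p div n) (q div n) * B (p mod n) (q mod n)"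

definition col_class :: "nat \<Rightarrow> nat \<Rightarrow> nat \<Rightarrow> nat set" where
  "col_class m n i = {k * n + i | k. k < m}"

definition switch_block :: "nat set \<Rightarrow> nat set \<Rightarrow> complex \<Rightarrow> (nat \<Rightarrow> nat \<Rightarrow> complex) \<Rightarrow> nat \<Rightarrow> nat \<Rightarrow> complex" where
  "switch_block RS CS a H p q = (if p \<in> RS \<and> q \<in> CS then a * H p q else H p q)"

end

theory Submission
  imports Defs "Jordan_Normal_Form.Determinant"
begin

text \<open>The Gram matrix of a Kronecker product is the Kronecker product of the Gram
  matrices, so \<open>H\<close> is complex Hadamard. On the column class \<open>C\<^sub>i\<close>, row \<open>p\<close> of \<open>H\<close> is the
  scalar \<open>H\<^sub>n(p mod n, i)\<close> times row \<open>p div n\<close> of \<open>H\<^sub>m\<close>; hence rows from different row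
  blocks are orthogonal already on \<open>C\<^sub>i\<close>. Multiplying the first row block on \<open>C\<^sub>i\<close> by a
  unimodular \<open>a\<close> leaves inner products within a block unchanged and changes those across
  blocks only by a multiple of a vanishing partial sum. Orthogonality of the columns of
  \<open>M\<^sub>1\<^sub>i\<close> and \<open>M\<^sub>1\<^sub>j\<close> reduces to that of columns \<open>i\<close> and \<open>j\<close> of \<open>H\<^sub>n\<close>, i.e. to \<open>H\<^sub>n\<^sup>* H\<^sub>n = n I\<close>.\<close>

lemma complex_hadamard_columns_orthogonal:
  assumes hadamard: "complex_hadamard n A" and "i < n" "j < n"
  shows "(\<Sum>r<n. A r i * cnj (A r j)) = (if i = j then of_nat n else 0)"
proof -
  have "n > 0" using \<open>i < n\<close> by simp
  define M where "M = mat n n (\<lambda>(i, j). A i j)"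
  define B where "B = mat n n (\<lambda>(i, j). cnj (A j i) / of_nat n)"
  have "M * B = 1\<^sub>m n"
  proof (rule eq_matI)
    fix p q assume p: "p < dim_row (1\<^sub>m n)" and q: "q < dim_col (1\<^sub>m n)"
    have "(M * B) $$ (p, q) = (\<Sum>k<n. A p k * (cnj (A q k) / of_nat n))"
      using p q by (simp add: M_def B_def scalar_prod_def lessThan_atLeast0)
    also have "\<dots> = (\<Sum>k<n. A p k * cnj (A q k)) / of_nat n"
      by (simp add: sum_divide_distrib)
    also have "\<dots> = 1\<^sub>m n $$ (p, q)"
      using hadamard p q \<open>n > 0\<close> unfolding complex_hadamard_def by simp
    finally show "(M * B) $$ (p, q) = 1\<^sub>m n $$ (p, q)" .
  qed (auto simp: M_def B_def)
  then have "B * M = 1\<^sub>m n"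
    by (rule mat_mult_left_right_inverse[rotated 2]) (auto simp: M_def B_def)
  then have "(B * M) $$ (j, i) = (if i = j then 1 else 0)"
    using \<open>i < n\<close> \<open>j < n\<close> by auto
  moreover have "(B * M) $$ (j, i) = (\<Sum>r<n. cnj (A r j) / of_nat n * A r i)"
    using \<open>i < n\<close> \<open>j < n\<close> by (simp add: M_def B_def scalar_prod_def lessThan_atLeast0)
  also have "\<dots> = (\<Sum>r<n. A r i * cnj (A r j)) / of_nat n"
    by (simp add: sum_divide_distrib mult.commute)
  ultimately show ?thesis using \<open>n > 0\<close> by (cases "i = j") (auto simp: field_simps)
qed

lemma sum_lessThan_mult_split:
  fixes f :: "nat \<Rightarrow> 'a::comm_monoid_add"
  shows "(\<Sum>c<m*n. f c) = (\<Sum>k<m. \<Sum>j<n. f (k*n + j))"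
proof -
  have "(\<Sum>c<m*n. f c) = (\<Sum>k<m. \<Sum>c\<in>{k*n..<k*n+n}. f c)"
    by (rule sum.nat_group[symmetric])
  also have "\<dots> = (\<Sum>k<m. \<Sum>j<n. f (k*n + j))"
    by (simp add: sum.atLeastLessThan_shift_0 atLeast0LessThan comp_def)
  finally show ?thesis .
qed

lemma sum_scale_on_null_subset:
  fixes f :: "'b \<Rightarrow> 'a::semiring_0"
  assumes "finite A" "C \<subseteq> A" "sum f C = 0"
  shows "(\<Sum>x\<in>A. if x \<in> C then b * f x else f x) = sum f A"
proof -
  have "(\<Sum>x\<in>A. if x \<in> C then b * f x else f x) = b * sum f C + sum f (A - C)"
    using assms(1,2) by (simp add: sum.If_cases Int_absorb1 Diff_eq sum_distrib_left)
  also have "\<dots> = sum f C + sum f (A - C)"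
    using assms(3) by simp
  also have "\<dots> = sum f A"
    using assms(1,2) by (metis add.commute sum.subset_diff)
  finally show ?thesis .
qed

lemma complex_hadamard_switch_block:
  assumes hadamard: "complex_hadamard N H" and "CS \<subseteq> {..<N}" and "norm a = 1"
    and block_orthogonal: "\<And>p q. p < N \<Longrightarrow> q < N \<Longrightarrow> p \<in> RS \<Longrightarrow> q \<notin> RS \<Longrightarrow>
          (\<Sum>c\<in>CS. H p c * cnj (H q c)) = 0"
  shows "complex_hadamard N (switch_block RS CS a H)"
  unfolding complex_hadamard_def
proof (intro conjI allI impI)
  let ?S = "switch_block RS CS a H"
  have "a * cnj a = 1"
    using \<open>norm a = 1\<close> complex_norm_square[of a] by simp
  fix p q assume p: "p < N" and q: "q < N"
  show "norm (?S p q) = 1"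
    using hadamard p q \<open>norm a = 1\<close> by (simp add: switch_block_def complex_hadamard_def norm_mult)
  define X where "X c = H p c * cnj (H q c)" for c
  define s where "s = (if p \<in> RS then a else 1) * cnj (if q \<in> RS then a else 1)"
  have product: "?S p c * cnj (?S q c) = (if c \<in> CS then s * X c else X c)" for c
    by (simp add: switch_block_def X_def s_def algebra_simps)
  have "s = 1 \<or> sum X CS = 0"
  proof (cases "p \<in> RS"; cases "q \<in> RS")
    assume "p \<notin> RS" "q \<in> RS"
    then have "(\<Sum>c\<in>CS. H q c * cnj (H p c)) = 0" using block_orthogonal p q by blast
    then have "(\<Sum>c\<in>CS. cnj (X c)) = 0" by (simp add: X_def mult.commute)
    then show ?thesis by (metis cnj_sum complex_cnj_zero_iff)
  qed (use \<open>a * cnj a = 1\<close> block_orthogonal p q in \<open>auto simp: s_def X_def\<close>)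
  then have "(\<Sum>c<N. ?S p c * cnj (?S q c)) = sum X {..<N}"
  proof
    assume "s = 1"
    then show ?thesis unfolding product by (simp cong: if_cong)
  next
    assume "sum X CS = 0"
    then show ?thesis
      unfolding product by (rule sum_scale_on_null_subset[OF finite_lessThan \<open>CS \<subseteq> {..<N}\<close>])
  qed
  then show "(\<Sum>c<N. ?S p c * cnj (?S q c)) = (if p = q then of_nat N else 0)"
    using hadamard p q by (simp add: X_def complex_hadamard_def)
qed

lemma kron_complex_hadamard:
  assumes hm: "complex_hadamard m Hm" and hn: "complex_hadamard n Hn" and "0 < n"
  shows "complex_hadamard (m*n) (kron n Hm Hn)"
  unfolding complex_hadamard_def
proof (intro conjI allI impI)
  fix p q assume "p < m*n" "q < m*n"
  then have blocks: "p div n < m" "q div n < m" "p mod n < n" "q mod n < n"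
    using \<open>0 < n\<close> by (auto simp: less_mult_imp_div_less)
  then show "norm (kron n Hm Hn p q) = 1"
    using hm hn by (simp add: kron_def complex_hadamard_def norm_mult)
  have "(\<Sum>c<m*n. kron n Hm Hn p c * cnj (kron n Hm Hn q c))
      = (\<Sum>k<m. \<Sum>j<n. (Hm (p div n) k * cnj (Hm (q div n) k)) *
                        (Hn (p mod n) j * cnj (Hn (q mod n) j)))"
    unfolding sum_lessThan_mult_split using \<open>0 < n\<close>
    by (intro sum.cong refl) (simp add: kron_def algebra_simps)
  also have "\<dots> = (\<Sum>k<m. Hm (p div n) k * cnj (Hm (q div n) k)) *
                    (\<Sum>j<n. Hn (p mod n) j * cnj (Hn (q mod n) j))"
    by (simp add: sum_product)
  also have "\<dots> = (if p div n = q div n then of_nat m else 0) *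
                    (if p mod n = q mod n then of_nat n else 0)"
    using hm hn blocks unfolding complex_hadamard_def by simp
  also have "\<dots> = (if p = q then of_nat (m*n) else 0)"
  proof -
    have "p = q \<longleftrightarrow> p div n = q div n \<and> p mod n = q mod n" by (metis div_mult_mod_eq)
    then show ?thesis by auto
  qed
  finally show "(\<Sum>c<m*n. kron n Hm Hn p c * cnj (kron n Hm Hn q c))
      = (if p = q then of_nat (m*n) else 0)" .
qed

lemma col_class_iff:
  assumes "i < n"
  shows "c \<in> col_class m n i \<longleftrightarrow> c < m*n \<and> c mod n = i"
proof
  assume "c \<in> col_class m n i"
  then obtain k where k: "k < m" "c = k*n + i" by (auto simp: col_class_def)
  have "k*n + i < Suc k * n" using assms by simp
  also have "\<dots> \<le> m*n" using k(1) by (intro mult_right_mono) auto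
  finally show "c < m*n \<and> c mod n = i" using k assms by simp
next
  assume "c < m*n \<and> c mod n = i"
  then have "c div n < m" "c = c div n * n + i" by (auto simp: less_mult_imp_div_less)
  then show "c \<in> col_class m n i" unfolding col_class_def by blast
qed

lemma col_class_partition:
  assumes "0 < m" "0 < n"
  shows "(\<forall>i<n. col_class m n i \<noteq> {}) \<and>
         (\<forall>i<n. \<forall>j<n. i \<noteq> j \<longrightarrow> col_class m n i \<inter> col_class m n j = {}) \<and>
         (\<Union>i<n. col_class m n i) = {..<m*n}"
proof (intro conjI allI impI)
  fix i assume "i < n"
  then have "i \<in> col_class m n i" using \<open>0 < m\<close> by (simp add: col_class_iff less_le_trans)
  then show "col_class m n i \<noteq> {}" by blast
next
  fix i j assume "i < n" "j < n" "i \<noteq> j"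
  then show "col_class m n i \<inter> col_class m n j = {}" by (auto simp: col_class_iff)
next
  show "(\<Union>i<n. col_class m n i) = {..<m*n}"
    using \<open>0 < n\<close> by (auto simp: col_class_iff)
qed

lemma sum_col_class:
  fixes g :: "nat \<Rightarrow> 'a::comm_monoid_add"
  assumes "0 < n"
  shows "(\<Sum>c\<in>col_class m n i. g c) = (\<Sum>k<m. g (k*n + i))"
proof -
  have "col_class m n i = (\<lambda>k. k*n + i) ` {..<m}" by (auto simp: col_class_def)
  moreover have "inj_on (\<lambda>k. k*n + i) {..<m}" using assms by (auto simp: inj_on_def)
  ultimately show ?thesis by (simp add: sum.reindex)
qed

lemma kron_rows_orthogonal_on_col_class:
  assumes hm: "complex_hadamard m Hm" and "i < n"
    and "p < m*n" "q < m*n" "p div n \<noteq> q div n"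
  shows "(\<Sum>c\<in>col_class m n i. kron n Hm Hn p c * cnj (kron n Hm Hn q c)) = 0"
proof -
  have "p div n < m" "q div n < m"
    using \<open>p < m*n\<close> \<open>q < m*n\<close> by (auto simp: less_mult_imp_div_less)
  have "(\<Sum>c\<in>col_class m n i. kron n Hm Hn p c * cnj (kron n Hm Hn q c))
      = Hn (p mod n) i * cnj (Hn (q mod n) i) * (\<Sum>k<m. Hm (p div n) k * cnj (Hm (q div n) k))"
    using \<open>i < n\<close> by (simp add: sum_col_class kron_def sum_distrib_left algebra_simps)
  also have "\<dots> = 0"
    using hm \<open>p div n < m\<close> \<open>q div n < m\<close> \<open>p div n \<noteq> q div n\<close>
    unfolding complex_hadamard_def by simp
  finally show ?thesis .
qed

lemma kron_first_rows_col_class_orthogonal: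
  assumes hn: "complex_hadamard n Hn" and "i < n" "j < n" "i \<noteq> j"
    and "c \<in> col_class m n i" "c' \<in> col_class m n j"
  shows "(\<Sum>r<n. kron n Hm Hn r c * cnj (kron n Hm Hn r c')) = 0"
proof -
  obtain k k' where "c = k*n + i" "c' = k'*n + j"
    using \<open>c \<in> col_class m n i\<close> \<open>c' \<in> col_class m n j\<close> by (auto simp: col_class_def)
  then have "(\<Sum>r<n. kron n Hm Hn r c * cnj (kron n Hm Hn r c'))
      = Hm 0 k * cnj (Hm 0 k') * (\<Sum>r<n. Hn r i * cnj (Hn r j))"
    using \<open>i < n\<close> \<open>j < n\<close> by (simp add: kron_def sum_distrib_left algebra_simps)
  also have "\<dots> = 0"
    using complex_hadamard_columns_orthogonal[OF hn \<open>i < n\<close> \<open>j < n\<close>] \<open>i \<noteq> j\<close> by simp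
  finally show ?thesis .
qed

theorem corollary6p5:
  fixes m n :: nat and Hm Hn :: "nat \<Rightarrow> nat \<Rightarrow> complex"
  assumes "0 < m" and "0 < n"
    and "complex_hadamard m Hm" and "complex_hadamard n Hn"
  defines "H \<equiv> kron n Hm Hn"
    and "R1 \<equiv> {..<n}" and "R \<equiv> {n..<m*n}"
  shows "((\<forall>i<n. col_class m n i \<noteq> {}) \<and>
         (\<forall>i<n. \<forall>j<n. i \<noteq> j \<longrightarrow> col_class m n i \<inter> col_class m n j = {}) \<and>
         (\<Union>i<n. col_class m n i) = {..<m*n}) \<and>
         (R \<inter> R1 = {} \<and> R \<union> R1 = {..<m*n}) \<and>
         (\<forall>i<n. \<forall>j<n. i \<noteq> j \<longrightarrow>
           (\<forall>c\<in>col_class m n i. \<forall>c'\<in>col_class m n j.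
              (\<Sum>r\<in>R1. H r c * cnj (H r c')) = 0)) \<and>
         (\<forall>i<n. \<forall>a::complex. norm a = 1 \<longrightarrow>
           complex_hadamard (m*n) (switch_block R1 (col_class m n i) a H))"
proof -
  have rows: "R \<inter> R1 = {} \<and> R \<union> R1 = {..<m*n}"
    using \<open>0 < m\<close> by (auto simp: R_def R1_def intro: order.strict_trans2)
  have columns: "\<forall>i<n. \<forall>j<n. i \<noteq> j \<longrightarrow>
      (\<forall>c\<in>col_class m n i. \<forall>c'\<in>col_class m n j. (\<Sum>r\<in>R1. H r c * cnj (H r c')) = 0)"
    unfolding H_def R1_def using kron_first_rows_col_class_orthogonal[OF assms(4)] by blast
  have switching: "complex_hadamard (m*n) (switch_block R1 (col_class m n i) a H)"
    if "i < n" "norm a = 1" for i a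
    unfolding H_def
  proof (rule complex_hadamard_switch_block)
    show "complex_hadamard (m*n) (kron n Hm Hn)" by (rule kron_complex_hadamard[OF assms(3,4,2)])
    show "col_class m n i \<subseteq> {..<m*n}" using \<open>i < n\<close> by (auto simp: col_class_iff)
    fix p q assume "p < m*n" "q < m*n" "p \<in> R1" "q \<notin> R1"
    then have "p div n \<noteq> q div n" by (simp add: R1_def div_eq_0_iff)
    then show "(\<Sum>c\<in>col_class m n i. kron n Hm Hn p c * cnj (kron n Hm Hn q c)) = 0"
      by (rule kron_rows_orthogonal_on_col_class[OF assms(3) \<open>i < n\<close> \<open>p < m*n\<close> \<open>q < m*n\<close>])
  qed (fact \<open>norm a = 1\<close>)
  show ?thesis
    by (intro col_class_partition[OF assms(1,2)] rows columns switching conjI allI impI)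
qed

end
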